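(* Let $A,B,C\in\operatorname{Sym}(n,\mathbb{R})$ be such that $Q_C$ vanishes on $\{Q_A=0\}\cap\{Q_B=0\}$, and let $\mathcal{N}:=\{z\in\mathbb{R}^n:Q_A(z)=Q_B(z)=0,\ Az\wedge Bz\ne0\}$. Then for every $x_0\in\mathcal{N}$ there exist $\alpha(x_0),\beta(x_0)\in\mathbb{R}$ such that $Q_C|_{V_{x_0}}=\alpha(x_0)Q_A|_{V_{x_0}}+\beta(x_0)Q_B|_{V_{x_0}}$ and $Cx_0=\alpha(x_0)Ax_0+\beta(x_0)Bx_0$, where $V_{x_0}:=(\operatorname{span}_{\mathbb{R}}\{Ax_0,Bx_0\})^\perp$. Moreover, locally on $\mathcal{N}$ the numbers $\alpha(x_0),\beta(x_0)$ can be chosen as real-analytic functions of $x_0$.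
   Context: $Q_M(z)={}^tzMz$; $\perp$ is the Euclidean orthogonal complement; $V_{x_0}$ is the tangent space to the analytic submanifold $\mathcal{N}$ at $x_0$. *)

theory Defs
  imports "HOL-Analysis.Analysis"
begin

definition Qf :: "real^'n^'n \<Rightarrow> real^'n \<Rightarrow> real" where
  "Qf M z = z \<bullet> (M *v z)"

definition symmetric_mat :: "real^'n^'n \<Rightarrow> bool" where
  "symmetric_mat M \<longleftrightarrow> transpose M = M"

definition wedge2 :: "real^'n \<Rightarrow> real^'n \<Rightarrow> real^'n^'n" where
  "wedge2 u v = (\<chi> i j. u$i * v$j - u$j * v$i)"

definition calN :: "real^'n^'n \<Rightarrow> real^'n^'n \<Rightarrow> (real^'n) set" where
  "calN A B = {z. Qf A z = 0 \<and> Qf B z = 0 \<and> wedge2 (A *v z) (B *v z) \<noteq> 0}"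

definition Vsp :: "real^'n^'n \<Rightarrow> real^'n^'n \<Rightarrow> real^'n \<Rightarrow> (real^'n) set" where
  "Vsp A B x = orthogonal_comp (span {A *v x, B *v x})"

text \<open>Real-analytic functions on an open set U of R^n: near every point p of U,
  f is the sum of a (multivariate) power series centred at p, indexed by
  multi-indices k :: 'n => nat (unconditional = absolute convergence in R).\<close>
definition real_analytic_on :: "(real^'n \<Rightarrow> real) \<Rightarrow> (real^'n) set \<Rightarrow> bool" where
  "real_analytic_on f U \<longleftrightarrow>
     (\<forall>p\<in>U. \<exists>r>0. \<exists>c :: ('n \<Rightarrow> nat) \<Rightarrow> real.
        \<forall>x\<in>ball p r. ((\<lambda>k. c k * (\<Prod>i\<in>UNIV. (x$i - p$i) ^ k i)) has_sum f x) UNIV)"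

end

(* At x0 in N the vectors a = A x0 and b = B x0 are independent. Take alpha, beta to be the
   coefficients of the orthogonal projection of c = C x0 onto span {a, b} and put
   M = C - alpha A - beta B: a symmetric matrix with M x0 orthogonal to a and b whose quadratic form
   vanishes on {Q_A = Q_B = 0}. For every u orthogonal to a and b, Brouwer's fixed point theorem
   gives points x0 + t u + O(t^2) of {Q_A = Q_B = 0}. Expanding Q_M along them to first order gives
   u . M x0 = 0, so M x0 = 0 (take u = M x0); to second order it then gives Q_M u = 0.
   By Cramer's rule alpha and beta are rational functions of x0 whose denominator, the Gram
   determinant of a and b, is positive on N; such quotients are real-analytic, as shown with
   absolutely convergent multivariate power series and the geometric series for 1 / f. *)

theory Submission
  imports Defs
begin

section \<open>Multivariate power series\<close>

definition mpow :: "real^'n \<Rightarrow> ('n \<Rightarrow> nat) \<Rightarrow> real" where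
  "mpow y k = (\<Prod>i\<in>UNIV. (y$i) ^ k i)"

definition mdeg :: "('n::finite \<Rightarrow> nat) \<Rightarrow> nat" where
  "mdeg k = (\<Sum>i\<in>UNIV. k i)"

definition has_power_series ::
    "(real^'n \<Rightarrow> real) \<Rightarrow> (('n \<Rightarrow> nat) \<Rightarrow> real) \<Rightarrow> real^'n \<Rightarrow> real \<Rightarrow> bool" where
  "has_power_series f c p r \<longleftrightarrow> 0 < r \<and> (\<lambda>k. \<bar>c k\<bar> * r ^ mdeg k) summable_on UNIV \<and>
     (\<forall>y. (\<forall>i. \<bar>y$i\<bar> \<le> r) \<longrightarrow> ((\<lambda>k. c k * mpow y k) has_sum f (p + y)) UNIV)"

text \<open>This weighted \<open>l\<^sup>1\<close> norm of the coefficients is submultiplicative, which is what lets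
  \<open>1 / f\<close> be expanded as a geometric series.\<close>
definition coeff_norm :: "real \<Rightarrow> (('n::finite \<Rightarrow> nat) \<Rightarrow> real) \<Rightarrow> real" where
  "coeff_norm r c = (\<Sum>\<^sub>\<infinity>k. \<bar>c k\<bar> * r ^ mdeg k)"

definition real_analytic_at :: "(real^'n \<Rightarrow> real) \<Rightarrow> real^'n \<Rightarrow> bool" where
  "real_analytic_at f p \<longleftrightarrow> (\<exists>r c. has_power_series f c p r)"

lemma abs_mpow_le:
  assumes "\<forall>i. \<bar>y$i\<bar> \<le> r"
  shows "\<bar>mpow y k\<bar> \<le> r ^ mdeg k"
proof -
  have "\<bar>mpow y k\<bar> = (\<Prod>i\<in>UNIV. \<bar>y$i\<bar> ^ k i)"
    by (simp add: mpow_def abs_prod power_abs)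
  also have "\<dots> \<le> (\<Prod>i\<in>UNIV. r ^ k i)"
    by (intro prod_mono) (use assms in \<open>auto intro: power_mono\<close>)
  also have "\<dots> = r ^ mdeg k"
    by (simp add: mdeg_def power_sum)
  finally show ?thesis .
qed

lemma mpow_add: "mpow y (\<lambda>i. k i + l i) = mpow y k * mpow y l"
  by (simp add: mpow_def power_add prod.distrib)

lemma mdeg_add: "mdeg (\<lambda>i. k i + l i) = mdeg k + mdeg l"
  by (simp add: mdeg_def sum.distrib)

lemma mpow_zero_index [simp]: "mpow y (\<lambda>_. 0) = 1"
  by (simp add: mpow_def)

lemma mdeg_zero_index [simp]: "mdeg (\<lambda>_. 0) = 0"
  by (simp add: mdeg_def)

lemma mpow_at_zero: "mpow 0 k = (if k = (\<lambda>_. 0) then 1 else 0)"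
proof (cases "k = (\<lambda>_. 0)")
  case False
  then obtain i where "k i \<noteq> 0" by auto
  then have "(\<Prod>j\<in>UNIV. (0::real) ^ k j) = 0"
    by (subst prod_zero_iff) auto
  with False show ?thesis by (simp add: mpow_def)
qed simp

lemma mdeg_pos: "k \<noteq> (\<lambda>_. 0) \<Longrightarrow> 0 < mdeg k"
  by (auto simp: mdeg_def)

lemma has_power_series_center:
  assumes "has_power_series f c p r"
  shows "f p = c (\<lambda>_. 0)"
proof -
  have "((\<lambda>k. c k * mpow 0 k) has_sum f (p + 0)) UNIV"
    using assms unfolding has_power_series_def by (auto dest: spec[where x = 0])
  moreover have "((\<lambda>k. c k * mpow 0 k) has_sum c (\<lambda>_. 0)) UNIV"
    by (rule has_sum_finite_neutralI[where B = "{\<lambda>_. 0}"]) (auto simp: mpow_at_zero)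
  ultimately show ?thesis
    using has_sum_unique by fastforce
qed

lemma has_power_series_abs_le:
  assumes "has_power_series f c p r" "\<forall>i. \<bar>y$i\<bar> \<le> r"
  shows "\<bar>f (p + y)\<bar> \<le> coeff_norm r c"
proof -
  have "((\<lambda>k. c k * mpow y k) has_sum f (p + y)) UNIV"
    and "((\<lambda>k. \<bar>c k\<bar> * r ^ mdeg k) has_sum coeff_norm r c) UNIV"
    using assms unfolding has_power_series_def coeff_norm_def by auto
  from norm_infsum_le[OF this] show ?thesis
    using abs_mpow_le[OF assms(2)] by (simp add: abs_mult mult_left_mono)
qed

lemma coeff_norm_nonneg: "0 \<le> r \<Longrightarrow> 0 \<le> coeff_norm r c"
  unfolding coeff_norm_def by (intro infsum_nonneg) auto

lemma has_power_series_smaller_radius: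
  assumes "has_power_series f c p r" "0 < r'" "r' \<le> r"
  shows "has_power_series f c p r'"
proof -
  have "(\<lambda>k. \<bar>c k\<bar> * r ^ mdeg k) summable_on UNIV"
    using assms unfolding has_power_series_def by auto
  then have "(\<lambda>k. \<bar>c k\<bar> * r' ^ mdeg k) summable_on UNIV"
    by (rule summable_on_comparison_test) (use assms in \<open>auto intro!: mult_left_mono power_mono\<close>)
  with assms show ?thesis
    unfolding has_power_series_def by (auto intro: order_trans)
qed

lemma coeff_norm_shrink:
  assumes "has_power_series f c p r" "c (\<lambda>_. 0) = 0" "0 < r'" "r' \<le> r"
  shows "coeff_norm r' c \<le> (r' / r) * coeff_norm r c"
proof -
  have r: "0 < r" using assms by auto
  have s: "(\<lambda>k. \<bar>c k\<bar> * r ^ mdeg k) summable_on UNIV"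
    using assms unfolding has_power_series_def by auto
  have s': "(\<lambda>k. \<bar>c k\<bar> * r' ^ mdeg k) summable_on UNIV"
    using has_power_series_smaller_radius[OF assms(1,3,4)] unfolding has_power_series_def by auto
  have le: "\<bar>c k\<bar> * r' ^ mdeg k \<le> (r' / r) * (\<bar>c k\<bar> * r ^ mdeg k)" for k
  proof (cases "k = (\<lambda>_. 0)")
    case False
    then obtain d where d: "mdeg k = Suc d"
      using mdeg_pos gr0_implies_Suc by blast
    have "r' ^ d \<le> r ^ d" using assms by (intro power_mono) auto
    then have "r' ^ mdeg k \<le> (r' / r) * r ^ mdeg k"
      using r assms(3) by (simp add: d)
    then have "\<bar>c k\<bar> * r' ^ mdeg k \<le> \<bar>c k\<bar> * ((r' / r) * r ^ mdeg k)"
      by (rule mult_left_mono) simp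
    then show ?thesis
      by (simp add: mult_ac)
  qed (use assms in simp)
  have "coeff_norm r' c \<le> (\<Sum>\<^sub>\<infinity>k. (r' / r) * (\<bar>c k\<bar> * r ^ mdeg k))"
    unfolding coeff_norm_def by (intro infsum_mono s' le summable_on_cmult_right s)
  also have "\<dots> = (r' / r) * coeff_norm r c"
    unfolding coeff_norm_def by (rule infsum_cmult_right')
  finally show ?thesis .
qed

lemma has_power_series_finite:
  assumes "finite F" "\<And>k. k \<notin> F \<Longrightarrow> c k = 0"
    and "\<And>y. f (p + y) = (\<Sum>k\<in>F. c k * mpow y k)" and "0 < r"
  shows "has_power_series f c p r"
  unfolding has_power_series_def
proof (intro conjI allI impI)
  show "(\<lambda>k. \<bar>c k\<bar> * r ^ mdeg k) summable_on UNIV"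
    by (rule has_sum_imp_summable, rule has_sum_finite_neutralI[where B = F]) (use assms in auto)
  show "((\<lambda>k. c k * mpow y k) has_sum f (p + y)) UNIV" for y
    by (rule has_sum_finite_neutralI[where B = F]) (use assms in auto)
qed (use assms in auto)

lemma has_power_series_const:
  assumes "0 < r"
  shows "has_power_series (\<lambda>_. b) (\<lambda>k. if k = (\<lambda>_. 0) then b else 0) p r"
    and "coeff_norm r (\<lambda>k. if k = (\<lambda>_. 0) then b else 0) = \<bar>b\<bar>"
proof -
  show "has_power_series (\<lambda>_. b) (\<lambda>k. if k = (\<lambda>_. 0) then b else 0) p r"
    by (rule has_power_series_finite[where F = "{\<lambda>_. 0}"]) (use assms in auto)
  have "((\<lambda>k. \<bar>if k = (\<lambda>_. 0) then b else 0\<bar> * r ^ mdeg k) has_sum \<bar>b\<bar>) UNIV"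
    by (rule has_sum_finite_neutralI[where B = "{\<lambda>_. 0}"]) auto
  then show "coeff_norm r (\<lambda>k. if k = (\<lambda>_. 0) then b else 0) = \<bar>b\<bar>"
    unfolding coeff_norm_def by (rule infsumI)
qed

lemma has_sum_group_fibres:
  fixes T :: "'i \<Rightarrow> real" and \<mu> :: "'i \<Rightarrow> 'k"
  assumes "(T has_sum S) UNIV"
  shows "((\<lambda>k. \<Sum>\<^sub>\<infinity>i\<in>{i. \<mu> i = k}. T i) has_sum S) UNIV"
proof -
  have "bij_betw (\<lambda>i. (\<mu> i, i)) UNIV (Sigma UNIV (\<lambda>k. {i. \<mu> i = k}))"
    by (auto simp: bij_betw_def inj_on_def image_def)
  moreover have "((\<lambda>i. (T \<circ> snd) (\<mu> i, i)) has_sum S) UNIV"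
    using assms by simp
  ultimately have "((T \<circ> snd) has_sum S) (Sigma UNIV (\<lambda>k. {i. \<mu> i = k}))"
    using has_sum_reindex_bij_betw by blast
  moreover have "((\<lambda>i. (T \<circ> snd) (k, i)) has_sum (\<Sum>\<^sub>\<infinity>i\<in>{i. \<mu> i = k}. T i)) {i. \<mu> i = k}" for k
  proof -
    have "T summable_on {i. \<mu> i = k}"
      using assms summable_on_subset_banach has_sum_imp_summable by blast
    then show ?thesis
      by simp
  qed
  ultimately show ?thesis
    by (rule has_sum_Sigma')
qed

lemma summable_regrouped_coeffs:
  fixes a :: "'i \<Rightarrow> real" and \<mu> :: "'i \<Rightarrow> ('n::finite \<Rightarrow> nat)"
  assumes r: "0 < r" and s: "(\<lambda>i. \<bar>a i\<bar> * r ^ mdeg (\<mu> i)) summable_on UNIV"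
  defines "e \<equiv> \<lambda>k. \<Sum>\<^sub>\<infinity>i\<in>{i. \<mu> i = k}. a i"
  shows "(\<lambda>k. \<bar>e k\<bar> * r ^ mdeg k) summable_on UNIV"
    and "coeff_norm r e \<le> (\<Sum>\<^sub>\<infinity>i. \<bar>a i\<bar> * r ^ mdeg (\<mu> i))"
proof -
  define W where "W i = \<bar>a i\<bar> * r ^ mdeg (\<mu> i)" for i
  have WS: "(W has_sum (\<Sum>\<^sub>\<infinity>i. W i)) UNIV"
    using s unfolding W_def[abs_def] by (rule has_sum_infsum)
  have G: "((\<lambda>k. \<Sum>\<^sub>\<infinity>i\<in>{i. \<mu> i = k}. W i) has_sum (\<Sum>\<^sub>\<infinity>i. W i)) UNIV"
    by (rule has_sum_group_fibres[OF WS])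
  have le: "\<bar>e k\<bar> * r ^ mdeg k \<le> (\<Sum>\<^sub>\<infinity>i\<in>{i. \<mu> i = k}. W i)" for k
  proof -
    have "W summable_on {i. \<mu> i = k}"
      using WS summable_on_subset_banach has_sum_imp_summable by blast
    then have "(\<lambda>i. norm (a i * r ^ mdeg k)) summable_on {i. \<mu> i = k}"
      using r by (subst summable_on_cong[where g = W]) (auto simp: W_def abs_mult)
    then have "\<bar>\<Sum>\<^sub>\<infinity>i\<in>{i. \<mu> i = k}. a i * r ^ mdeg k\<bar> \<le> (\<Sum>\<^sub>\<infinity>i\<in>{i. \<mu> i = k}. norm (a i * r ^ mdeg k))"
      using norm_infsum_bound by (metis real_norm_def)
    also have "\<dots> = (\<Sum>\<^sub>\<infinity>i\<in>{i. \<mu> i = k}. W i)"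
      using r by (intro infsum_cong) (auto simp: W_def abs_mult)
    finally show ?thesis
      using r by (simp add: e_def infsum_cmult_left' abs_mult)
  qed
  show s2: "(\<lambda>k. \<bar>e k\<bar> * r ^ mdeg k) summable_on UNIV"
    by (rule summable_on_comparison_test[OF has_sum_imp_summable[OF G] le]) (use r in auto)
  have "coeff_norm r e \<le> (\<Sum>\<^sub>\<infinity>k. \<Sum>\<^sub>\<infinity>i\<in>{i. \<mu> i = k}. W i)"
    unfolding coeff_norm_def by (intro infsum_mono s2 le has_sum_imp_summable[OF G])
  also have "\<dots> = (\<Sum>\<^sub>\<infinity>i. W i)"
    using G infsumI by blast
  finally show "coeff_norm r e \<le> (\<Sum>\<^sub>\<infinity>i. \<bar>a i\<bar> * r ^ mdeg (\<mu> i))"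
    by (simp add: W_def)
qed

lemma has_power_series_regroup:
  fixes a :: "'i \<Rightarrow> real" and \<mu> :: "'i \<Rightarrow> ('n::finite \<Rightarrow> nat)"
  assumes r: "0 < r" and s: "(\<lambda>i. \<bar>a i\<bar> * r ^ mdeg (\<mu> i)) summable_on UNIV"
    and f: "\<And>y. \<forall>i. \<bar>y$i\<bar> \<le> r \<Longrightarrow> ((\<lambda>i. a i * mpow y (\<mu> i)) has_sum f (p + y)) UNIV"
  shows "has_power_series f (\<lambda>k. \<Sum>\<^sub>\<infinity>i\<in>{i. \<mu> i = k}. a i) p r"
proof -
  have "((\<lambda>k. (\<Sum>\<^sub>\<infinity>i\<in>{i. \<mu> i = k}. a i) * mpow y k) has_sum f (p + y)) UNIV"
    if y: "\<forall>i. \<bar>y$i\<bar> \<le> r" for y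
  proof -
    have "(\<Sum>\<^sub>\<infinity>i\<in>{i. \<mu> i = k}. a i * mpow y (\<mu> i)) = (\<Sum>\<^sub>\<infinity>i\<in>{i. \<mu> i = k}. a i * mpow y k)" for k
      by (intro infsum_cong) auto
    with has_sum_group_fibres[OF f[OF y], of \<mu>] show ?thesis
      by (simp add: infsum_cmult_left')
  qed
  with r summable_regrouped_coeffs(1)[OF r s] show ?thesis
    unfolding has_power_series_def by blast
qed

lemma has_sum_mult_pairs:
  fixes F :: "'a \<Rightarrow> real" and G :: "'b \<Rightarrow> real"
  assumes F: "(F has_sum S) UNIV" and G: "(G has_sum T) UNIV"
  shows "((\<lambda>(k, l). F k * G l) has_sum S * T) UNIV"
proof -
  have aF: "(\<lambda>k. \<bar>F k\<bar>) summable_on UNIV" and aG: "(\<lambda>l. \<bar>G l\<bar>) summable_on UNIV"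
    using has_sum_imp_summable[OF F] has_sum_imp_summable[OF G] summable_on_iff_abs_summable_on_real
    by auto
  have "(\<lambda>(k, l). \<bar>F k\<bar> * \<bar>G l\<bar>) summable_on Sigma UNIV (\<lambda>_. UNIV)"
  proof (rule summable_on_SigmaI)
    show "((\<lambda>l. (\<lambda>(k, l). \<bar>F k\<bar> * \<bar>G l\<bar>) (k, l)) has_sum \<bar>F k\<bar> * (\<Sum>\<^sub>\<infinity>l. \<bar>G l\<bar>)) UNIV" for k
      using has_sum_cmult_right[OF has_sum_infsum[OF aG]] by simp
    show "(\<lambda>k. \<bar>F k\<bar> * (\<Sum>\<^sub>\<infinity>l. \<bar>G l\<bar>)) summable_on UNIV"
      using summable_on_cmult_left[OF aF] by simp
  qed auto
  then have "(\<lambda>(k, l). F k * G l) summable_on Sigma UNIV (\<lambda>_. UNIV)"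
    by (subst summable_on_iff_abs_summable_on_real) (simp add: case_prod_unfold abs_mult)
  then have "((\<lambda>(k, l). F k * G l) has_sum S * T) (Sigma UNIV (\<lambda>_. UNIV))"
  proof (rule has_sum_SigmaI[rotated 2])
    show "((\<lambda>l. (\<lambda>(k, l). F k * G l) (k, l)) has_sum F k * T) UNIV" for k
      using has_sum_cmult_right[OF G] by simp
    show "((\<lambda>k. F k * T) has_sum S * T) UNIV"
      using has_sum_cmult_left[OF F] by simp
  qed
  then show ?thesis by simp
qed

lemma has_power_series_add:
  assumes "has_power_series f c p r" "has_power_series g d p r"
  shows "has_power_series (\<lambda>x. f x + g x) (\<lambda>k. c k + d k) p r"
  unfolding has_power_series_def
proof (intro conjI allI impI)
  have "(\<lambda>k. \<bar>c k\<bar> * r ^ mdeg k + \<bar>d k\<bar> * r ^ mdeg k) summable_on UNIV"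
    using assms unfolding has_power_series_def by (intro summable_on_add) auto
  then show "(\<lambda>k. \<bar>c k + d k\<bar> * r ^ mdeg k) summable_on UNIV"
    by (rule summable_on_comparison_test)
       (use assms in \<open>auto simp: has_power_series_def distrib_right[symmetric]
                          intro!: mult_right_mono abs_triangle_ineq\<close>)
  show "((\<lambda>k. (c k + d k) * mpow y k) has_sum f (p + y) + g (p + y)) UNIV"
    if "\<forall>i. \<bar>y$i\<bar> \<le> r" for y
    using assms that unfolding has_power_series_def by (simp add: distrib_right has_sum_add)
qed (use assms in \<open>auto simp: has_power_series_def\<close>)

lemma has_power_series_cmult:
  assumes "has_power_series f c p r"
  shows "has_power_series (\<lambda>x. a * f x) (\<lambda>k. a * c k) p r"
    and "coeff_norm r (\<lambda>k. a * c k) = \<bar>a\<bar> * coeff_norm r c"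
proof -
  have "(\<lambda>k. \<bar>a\<bar> * (\<bar>c k\<bar> * r ^ mdeg k)) summable_on UNIV"
    using assms unfolding has_power_series_def by (intro summable_on_cmult_right) auto
  moreover have "((\<lambda>k. a * c k * mpow y k) has_sum a * f (p + y)) UNIV"
    if "\<forall>i. \<bar>y$i\<bar> \<le> r" for y
  proof -
    have "((\<lambda>k. c k * mpow y k) has_sum f (p + y)) UNIV"
      using assms that unfolding has_power_series_def by auto
    from has_sum_cmult_right[OF this, of a] show ?thesis
      by (simp add: mult.assoc)
  qed
  ultimately show "has_power_series (\<lambda>x. a * f x) (\<lambda>k. a * c k) p r"
    using assms unfolding has_power_series_def by (simp add: abs_mult mult.assoc)
  show "coeff_norm r (\<lambda>k. a * c k) = \<bar>a\<bar> * coeff_norm r c"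
    unfolding coeff_norm_def by (simp add: abs_mult mult.assoc infsum_cmult_right')
qed

lemma has_power_series_mult:
  assumes f: "has_power_series f c p r" and g: "has_power_series g d p r"
  obtains e where "has_power_series (\<lambda>x. f x * g x) e p r"
    and "coeff_norm r e \<le> coeff_norm r c * coeff_norm r d"
proof -
  define a where "a = (\<lambda>(k::'a \<Rightarrow> nat, l::'a \<Rightarrow> nat). c k * d l)"
  define \<mu> where "\<mu> = (\<lambda>(k::'a \<Rightarrow> nat, l::'a \<Rightarrow> nat). (\<lambda>i. k i + l i))"
  have r: "0 < r"
    using f unfolding has_power_series_def by auto
  have weights: "(\<lambda>i. \<bar>a i\<bar> * r ^ mdeg (\<mu> i)) = (\<lambda>(k, l). (\<bar>c k\<bar> * r ^ mdeg k) * (\<bar>d l\<bar> * r ^ mdeg l))"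
    by (simp add: a_def \<mu>_def mdeg_add power_add abs_mult fun_eq_iff mult_ac)
  have W: "((\<lambda>i. \<bar>a i\<bar> * r ^ mdeg (\<mu> i)) has_sum coeff_norm r c * coeff_norm r d) UNIV"
    unfolding weights using f g unfolding has_power_series_def coeff_norm_def
    by (intro has_sum_mult_pairs) auto
  have "((\<lambda>i. a i * mpow y (\<mu> i)) has_sum f (p + y) * g (p + y)) UNIV"
    if "\<forall>i. \<bar>y$i\<bar> \<le> r" for y
  proof -
    have "(\<lambda>i. a i * mpow y (\<mu> i)) = (\<lambda>(k, l). (c k * mpow y k) * (d l * mpow y l))"
      by (simp add: a_def \<mu>_def mpow_add fun_eq_iff mult_ac)
    with f g that show ?thesis
      unfolding has_power_series_def by (simp add: has_sum_mult_pairs)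
  qed
  from has_power_series_regroup[OF r has_sum_imp_summable[OF W] this]
    summable_regrouped_coeffs(2)[OF r has_sum_imp_summable[OF W]] infsumI[OF W] that
  show thesis by auto
qed

lemma has_power_series_sum_series:
  fixes g :: "nat \<Rightarrow> real^'n::finite \<Rightarrow> real" and cs :: "nat \<Rightarrow> ('n \<Rightarrow> nat) \<Rightarrow> real"
  assumes r: "0 < r" and g: "\<And>j. has_power_series (g j) (cs j) p r"
    and norms: "(\<lambda>j. coeff_norm r (cs j)) summable_on UNIV"
    and F: "\<And>y. \<forall>i. \<bar>y$i\<bar> \<le> r \<Longrightarrow> ((\<lambda>j. g j (p + y)) has_sum F (p + y)) UNIV"
  shows "real_analytic_at F p"
proof -
  have "(\<lambda>(j, k). \<bar>cs j k\<bar> * r ^ mdeg k) summable_on Sigma UNIV (\<lambda>_. UNIV)"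
  proof (rule summable_on_SigmaI)
    show "((\<lambda>k. (\<lambda>(j, k). \<bar>cs j k\<bar> * r ^ mdeg k) (j, k)) has_sum coeff_norm r (cs j)) UNIV" for j
      using g[of j] unfolding has_power_series_def coeff_norm_def by (auto intro: has_sum_infsum)
  qed (use norms r in auto)
  then have s: "(\<lambda>i. \<bar>cs (fst i) (snd i)\<bar> * r ^ mdeg (snd i)) summable_on UNIV"
    by (simp add: case_prod_unfold)
  have "((\<lambda>i. cs (fst i) (snd i) * mpow y (snd i)) has_sum F (p + y)) UNIV"
    if y: "\<forall>i. \<bar>y$i\<bar> \<le> r" for y
  proof -
    have "(\<lambda>i. norm (cs (fst i) (snd i) * mpow y (snd i))) summable_on UNIV"
      by (rule Infinite_Sum.abs_summable_on_comparison_test'[OF s])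
         (use abs_mpow_le[OF y] r in \<open>auto simp: abs_mult intro!: mult_left_mono\<close>)
    then have sm: "(\<lambda>(j, k). cs j k * mpow y k) summable_on Sigma UNIV (\<lambda>_. UNIV)"
      by (subst summable_on_iff_abs_summable_on_real) (simp add: case_prod_unfold)
    have "((\<lambda>(j, k). cs j k * mpow y k) has_sum F (p + y)) (Sigma UNIV (\<lambda>_. UNIV))"
    proof (rule has_sum_SigmaI[OF _ F[OF y] sm])
      show "((\<lambda>k. (\<lambda>(j, k). cs j k * mpow y k) (j, k)) has_sum g j (p + y)) UNIV" for j
        using g[of j] y unfolding has_power_series_def by auto
    qed
    then show ?thesis
      by (simp add: case_prod_unfold)
  qed
  from has_power_series_regroup[OF r s this] show ?thesis
    unfolding real_analytic_at_def by blast
qed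

lemma has_power_series_power:
  assumes h: "has_power_series h c p r"
  shows "\<exists>e. has_power_series (\<lambda>x. h x ^ j) e p r \<and> coeff_norm r e \<le> coeff_norm r c ^ j"
proof -
  have r: "0 < r"
    using h unfolding has_power_series_def by auto
  show ?thesis
  proof (induction j)
    case 0
    show ?case
      by (intro exI[of _ "\<lambda>k. if k = (\<lambda>_. 0) then 1 else 0"]) (simp add: has_power_series_const[OF r])
  next
    case (Suc j)
    then obtain e where e: "has_power_series (\<lambda>x. h x ^ j) e p r" "coeff_norm r e \<le> coeff_norm r c ^ j"
      by blast
    obtain e' where "has_power_series (\<lambda>x. h x ^ j * h x) e' p r"
      and "coeff_norm r e' \<le> coeff_norm r e * coeff_norm r c"
      using has_power_series_mult[OF e(1) h] .
    moreover have "coeff_norm r e * coeff_norm r c \<le> coeff_norm r c ^ j * coeff_norm r c"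
      using e(2) r by (intro mult_right_mono coeff_norm_nonneg) auto
    ultimately show ?case
      by (auto simp: mult.commute)
  qed
qed

lemma has_power_series_coeff_norm_less_1:
  assumes h: "has_power_series h c p r" and c0: "c (\<lambda>_. 0) = 0"
  obtains r' where "0 < r'" "r' \<le> r" "coeff_norm r' c < 1"
proof -
  define N where "N = coeff_norm r c"
  define r' where "r' = r / (2 * (N + 1))"
  have r: "0 < r"
    using h unfolding has_power_series_def by auto
  have N: "0 \<le> N"
    using r by (simp add: N_def coeff_norm_nonneg)
  have r': "0 < r'" "r' \<le> r"
    using r N by (auto simp: r'_def field_simps)
  have "coeff_norm r' c \<le> (r' / r) * N"
    using coeff_norm_shrink[OF h c0 r'] by (simp add: N_def)
  also have "\<dots> = N / (2 * (N + 1))"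
    using r N by (simp add: r'_def)
  also have "\<dots> < 1"
    using N by (simp add: field_simps)
  finally show thesis
    using that r' by blast
qed

text \<open>With \<open>h = 1 - f / f p\<close> we have \<open>1 / f = (1 / f p) \<Sum>\<^sub>j h\<^sup>j\<close>. Since \<open>h\<close> vanishes at \<open>p\<close>,
  on a small polydisc the coefficient norm of \<open>h\<close> is less than 1, and by submultiplicativity
  the expansions of the \<open>h\<^sup>j\<close> can be summed.\<close>
lemma has_power_series_inverse:
  assumes f: "has_power_series f c p r" and nz: "f p \<noteq> 0"
  shows "real_analytic_at (\<lambda>x. inverse (f x)) p"
proof -
  have r: "0 < r"
    using f unfolding has_power_series_def by auto
  define h where "h x = 1 + (- 1 / f p) * f x" for x
  define hc where "hc k = (if k = (\<lambda>_. 0) then 1 else 0) + (- 1 / f p) * c k" for k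
  have h: "has_power_series h hc p r"
    unfolding h_def[abs_def] hc_def[abs_def]
    by (intro has_power_series_add has_power_series_const(1) r has_power_series_cmult(1) f)
  have "hc (\<lambda>_. 0) = 0"
    using has_power_series_center[OF f] nz by (simp add: hc_def)
  then obtain r' where r': "0 < r'" "r' \<le> r" and q1: "coeff_norm r' hc < 1"
    using has_power_series_coeff_norm_less_1[OF h] by blast
  define q where "q = coeff_norm r' hc"
  have q: "0 \<le> q" "q < 1"
    using r' q1 by (simp_all add: q_def coeff_norm_nonneg)
  have h': "has_power_series h hc p r'"
    by (rule has_power_series_smaller_radius[OF h r'])
  obtain E where E: "\<And>j. has_power_series (\<lambda>x. h x ^ j) (E j) p r'"
    and E_norm: "\<And>j. coeff_norm r' (E j) \<le> q ^ j"
    using has_power_series_power[OF h'] unfolding q_def by metis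
  have "(\<lambda>j. \<bar>1 / f p\<bar> * q ^ j) summable_on UNIV"
    using q by (intro summable_on_cmult_right summable_nonneg_imp_summable_on summable_geometric) auto
  moreover have "coeff_norm r' (\<lambda>k. (1 / f p) * E j k) \<le> \<bar>1 / f p\<bar> * q ^ j" for j
    unfolding has_power_series_cmult(2)[OF E] using E_norm by (rule mult_left_mono) simp
  ultimately have "(\<lambda>j. coeff_norm r' (\<lambda>k. (1 / f p) * E j k)) summable_on UNIV"
    by (rule summable_on_comparison_test) (use r' in \<open>simp_all add: coeff_norm_nonneg\<close>)
  moreover have "((\<lambda>j. (1 / f p) * h (p + y) ^ j) has_sum inverse (f (p + y))) UNIV"
    if y: "\<forall>i. \<bar>y$i\<bar> \<le> r'" for y
  proof -
    have z: "\<bar>h (p + y)\<bar> < 1"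
      using has_power_series_abs_le[OF h' y] q by (simp add: q_def)
    then have "((\<lambda>j. h (p + y) ^ j) has_sum (1 / (1 - h (p + y)))) UNIV"
      using geometric_sums[of "h (p + y)"] summable_geometric[of "\<bar>h (p + y)\<bar>"]
      by (intro norm_summable_imp_has_sum) (auto simp: power_abs)
    from has_sum_cmult_right[OF this, of "1 / f p"] nz show ?thesis
      by (simp add: h_def field_simps)
  qed
  ultimately show ?thesis
    by (intro has_power_series_sum_series[OF r'(1) has_power_series_cmult(1)[OF E]])
qed

lemma real_analytic_onI:
  assumes "\<And>p. p \<in> U \<Longrightarrow> real_analytic_at f p"
  shows "real_analytic_on f U"
  unfolding real_analytic_on_def
proof
  fix p assume "p \<in> U"
  then obtain r c where P: "has_power_series f c p r"
    using assms unfolding real_analytic_at_def by blast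
  have "((\<lambda>k. c k * (\<Prod>i\<in>UNIV. (x$i - p$i) ^ k i)) has_sum f x) UNIV" if x: "x \<in> ball p r" for x
  proof -
    have "\<bar>(x - p)$i\<bar> \<le> r" for i
      using component_le_norm_cart[of "x - p" i] x by (simp add: dist_norm norm_minus_commute)
    then have "((\<lambda>k. c k * mpow (x - p) k) has_sum f (p + (x - p))) UNIV"
      using P unfolding has_power_series_def by blast
    then show ?thesis
      by (simp add: mpow_def)
  qed
  moreover have "0 < r"
    using P unfolding has_power_series_def by auto
  ultimately show "\<exists>r>0. \<exists>c. \<forall>x\<in>ball p r. ((\<lambda>k. c k * (\<Prod>i\<in>UNIV. (x$i - p$i) ^ k i)) has_sum f x) UNIV"
    by blast
qed

lemma real_analytic_at_common_radius:
  assumes "real_analytic_at f p" "real_analytic_at g p"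
  obtains r c d where "has_power_series f c p r" "has_power_series g d p r"
proof -
  obtain r c s d where f: "has_power_series f c p r" and g: "has_power_series g d p s"
    using assms unfolding real_analytic_at_def by blast
  then have "0 < min r s"
    unfolding has_power_series_def by auto
  with f g show thesis
    using has_power_series_smaller_radius that by (metis min.cobounded1 min.cobounded2)
qed

lemma real_analytic_at_const: "real_analytic_at (\<lambda>_. b) p"
  using has_power_series_const(1)[of 1] unfolding real_analytic_at_def by (metis zero_less_one)

lemma real_analytic_at_component: "real_analytic_at (\<lambda>x. x$j) p"
proof -
  define \<delta> where "\<delta> = (\<lambda>i. if i = j then 1 else (0::nat))"
  have "\<delta> \<noteq> (\<lambda>_. 0)"
    by (auto simp: \<delta>_def fun_eq_iff)
  moreover have "mpow y \<delta> = y$j" for y :: "real^'a"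
    unfolding mpow_def \<delta>_def by (simp add: if_distrib cong: if_cong)
  ultimately have "has_power_series (\<lambda>x. x$j)
      (\<lambda>k. if k = (\<lambda>_. 0) then p$j else if k = \<delta> then 1 else 0) p 1"
    by (intro has_power_series_finite[where F = "{\<lambda>_. 0, \<delta>}"]) auto
  then show ?thesis
    unfolding real_analytic_at_def by blast
qed

lemma real_analytic_at_add:
  assumes "real_analytic_at f p" "real_analytic_at g p"
  shows "real_analytic_at (\<lambda>x. f x + g x) p"
  using real_analytic_at_common_radius[OF assms] has_power_series_add
  unfolding real_analytic_at_def by metis

lemma real_analytic_at_mult:
  assumes "real_analytic_at f p" "real_analytic_at g p"
  shows "real_analytic_at (\<lambda>x. f x * g x) p"
  using real_analytic_at_common_radius[OF assms] has_power_series_mult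
  unfolding real_analytic_at_def by metis

lemma real_analytic_at_inverse:
  assumes "real_analytic_at f p" "f p \<noteq> 0"
  shows "real_analytic_at (\<lambda>x. inverse (f x)) p"
  using assms has_power_series_inverse unfolding real_analytic_at_def by blast

lemma real_analytic_at_diff:
  assumes "real_analytic_at f p" "real_analytic_at g p"
  shows "real_analytic_at (\<lambda>x. f x - g x) p"
  using real_analytic_at_add[OF assms(1) real_analytic_at_mult[OF real_analytic_at_const assms(2)],
      of "- 1"]
  by simp

lemma real_analytic_at_divide:
  assumes "real_analytic_at f p" "real_analytic_at g p" "g p \<noteq> 0"
  shows "real_analytic_at (\<lambda>x. f x / g x) p"
  using real_analytic_at_mult[OF assms(1) real_analytic_at_inverse[OF assms(2,3)]]
  by (simp add: divide_inverse)

lemma real_analytic_at_sum: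
  assumes "finite S" "\<And>i. i \<in> S \<Longrightarrow> real_analytic_at (f i) p"
  shows "real_analytic_at (\<lambda>x. \<Sum>i\<in>S. f i x) p"
  using assms by (induction S rule: finite_induct) (auto intro: real_analytic_at_add real_analytic_at_const)

lemma real_analytic_at_inner_matrix_vector: "real_analytic_at (\<lambda>x. (M *v x) \<bullet> (N *v x)) p"
  unfolding inner_vec_def inner_real_def matrix_vector_mult_def
  by (simp, intro real_analytic_at_sum real_analytic_at_mult real_analytic_at_const
        real_analytic_at_component) auto

section \<open>Quadratic forms and the Gram determinant\<close>

lemma symmetric_mat_inner:
  assumes "symmetric_mat M"
  shows "(M *v x) \<bullet> y = x \<bullet> (M *v y)"
proof -
  have "x v* M = M *v x"
    using assms by (metis symmetric_mat_def vector_transpose_matrix)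
  then show ?thesis
    using dot_lmul_matrix[of x M y] by simp
qed

lemma symmetric_mat_diff_scaleR:
  assumes "symmetric_mat C" "symmetric_mat A" "symmetric_mat B"
  shows "symmetric_mat (C - a *\<^sub>R A - b *\<^sub>R B)"
  using assms by (simp add: symmetric_mat_def transpose_def vec_eq_iff)

lemma Qf_diff_scaleR: "Qf (C - a *\<^sub>R A - b *\<^sub>R B) x = Qf C x - a * Qf A x - b * Qf B x"
  by (simp add: Qf_def algebra_simps scaleR_matrix_vector_assoc[symmetric])

lemma Qf_add:
  assumes "symmetric_mat M"
  shows "Qf M (x + h) = Qf M x + 2 * (h \<bullet> (M *v x)) + Qf M h"
  using symmetric_mat_inner[OF assms, of h x]
  by (simp add: Qf_def matrix_vector_right_distrib inner_add_left inner_add_right inner_commute)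

lemma Qf_scaleR: "Qf M (t *\<^sub>R y) = t\<^sup>2 * Qf M y"
  by (simp add: Qf_def matrix_vector_mult_scaleR power2_eq_square)

lemma abs_Qf_le: "\<exists>K>0. \<forall>y. \<bar>Qf M y\<bar> \<le> K * (norm y)\<^sup>2"
proof -
  obtain K where K: "K > 0" "\<And>x. norm (M *v x) \<le> norm x * K"
    using bounded_linear.pos_bounded[OF matrix_vector_mul_bounded_linear[of M]] by blast
  have "\<bar>Qf M y\<bar> \<le> K * (norm y)\<^sup>2" for y
  proof -
    have "\<bar>Qf M y\<bar> \<le> norm y * norm (M *v y)"
      unfolding Qf_def by (rule Cauchy_Schwarz_ineq2)
    also have "\<dots> \<le> norm y * (norm y * K)"
      by (intro mult_left_mono K(2)) auto
    finally show ?thesis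
      by (simp add: power2_eq_square mult_ac)
  qed
  with K(1) show ?thesis by blast
qed

lemma continuous_on_Qf [continuous_intros]:
  "continuous_on S f \<Longrightarrow> continuous_on S (\<lambda>x. Qf M (f x))"
  unfolding Qf_def
  by (intro continuous_on_inner bounded_linear.continuous_on[OF matrix_vector_mul_bounded_linear])

lemma tendsto_Qf [tendsto_intros]:
  "(f \<longlongrightarrow> l) F \<Longrightarrow> ((\<lambda>x. Qf M (f x)) \<longlongrightarrow> Qf M l) F"
  unfolding Qf_def
  by (intro tendsto_inner bounded_linear.tendsto[OF matrix_vector_mul_bounded_linear])

definition gram2 :: "real^'n \<Rightarrow> real^'n \<Rightarrow> real" where
  "gram2 a b = (a \<bullet> a) * (b \<bullet> b) - (a \<bullet> b)\<^sup>2"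

lemma norm_wedge2_squared: "(norm (wedge2 a b))\<^sup>2 = 2 * gram2 a b"
proof -
  have "(norm (wedge2 a b))\<^sup>2 = (\<Sum>i\<in>UNIV. \<Sum>j\<in>UNIV. (a$i * b$j - a$j * b$i)\<^sup>2)"
    unfolding power2_norm_eq_inner by (simp add: inner_vec_def wedge2_def power2_eq_square)
  also have "\<dots> = (\<Sum>i\<in>UNIV. \<Sum>j\<in>UNIV. (a$i * a$i) * (b$j * b$j) + (b$i * b$i) * (a$j * a$j)
      - 2 * ((a$i * b$i) * (a$j * b$j)))"
    by (intro sum.cong refl) (simp add: power2_eq_square algebra_simps)
  also have "\<dots> = (\<Sum>i\<in>UNIV. \<Sum>j\<in>UNIV. (a$i * a$i) * (b$j * b$j))
      + (\<Sum>i\<in>UNIV. \<Sum>j\<in>UNIV. (b$i * b$i) * (a$j * a$j))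
      - 2 * (\<Sum>i\<in>UNIV. \<Sum>j\<in>UNIV. (a$i * b$i) * (a$j * b$j))"
    by (simp add: sum_subtractf sum.distrib sum_distrib_left)
  also have "\<dots> = (\<Sum>i\<in>UNIV. a$i * a$i) * (\<Sum>j\<in>UNIV. b$j * b$j)
      + (\<Sum>i\<in>UNIV. b$i * b$i) * (\<Sum>j\<in>UNIV. a$j * a$j)
      - 2 * ((\<Sum>i\<in>UNIV. a$i * b$i) * (\<Sum>j\<in>UNIV. a$j * b$j))"
    by (simp only: sum_product)
  also have "\<dots> = 2 * gram2 a b"
    by (simp add: gram2_def inner_vec_def power2_eq_square)
  finally show ?thesis .
qed

lemma gram2_pos: "wedge2 a b \<noteq> 0 \<Longrightarrow> 0 < gram2 a b"
  using norm_wedge2_squared[of a b] by (smt (verit) zero_less_norm_iff zero_less_power2)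

lemma dual_pair_exists:
  assumes "gram2 a b \<noteq> 0"
  obtains a' b' where "a' \<bullet> a = 1" "a' \<bullet> b = 0" "b' \<bullet> a = 0" "b' \<bullet> b = 1"
proof
  define \<Delta> where "\<Delta> = gram2 a b"
  let ?a' = "(1 / \<Delta>) *\<^sub>R ((b \<bullet> b) *\<^sub>R a - (a \<bullet> b) *\<^sub>R b)"
  let ?b' = "(1 / \<Delta>) *\<^sub>R ((a \<bullet> a) *\<^sub>R b - (a \<bullet> b) *\<^sub>R a)"
  have "\<Delta> \<noteq> 0" "\<Delta> = (a \<bullet> a) * (b \<bullet> b) - (a \<bullet> b) * (a \<bullet> b)"
    using assms by (simp_all add: \<Delta>_def gram2_def power2_eq_square)
  then show "?a' \<bullet> a = 1" "?a' \<bullet> b = 0" "?b' \<bullet> a = 0" "?b' \<bullet> b = 1"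
    by (simp_all add: inner_diff_left inner_commute[of b a] divide_simps)
qed

definition proj_coeff_fst :: "real^'n \<Rightarrow> real^'n \<Rightarrow> real^'n \<Rightarrow> real" where
  "proj_coeff_fst a b c = ((b \<bullet> b) * (c \<bullet> a) - (a \<bullet> b) * (c \<bullet> b)) / gram2 a b"

definition proj_coeff_snd :: "real^'n \<Rightarrow> real^'n \<Rightarrow> real^'n \<Rightarrow> real" where
  "proj_coeff_snd a b c = ((a \<bullet> a) * (c \<bullet> b) - (a \<bullet> b) * (c \<bullet> a)) / gram2 a b"

lemma proj_residual_orthogonal:
  fixes a b c :: "real^'n"
  assumes "gram2 a b \<noteq> 0"
  defines "v \<equiv> c - proj_coeff_fst a b c *\<^sub>R a - proj_coeff_snd a b c *\<^sub>R b"
  shows "v \<bullet> a = 0" and "v \<bullet> b = 0"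
proof -
  define \<Delta> where "\<Delta> = gram2 a b"
  have "\<Delta> \<noteq> 0" "\<Delta> = (a \<bullet> a) * (b \<bullet> b) - (a \<bullet> b) * (a \<bullet> b)"
    using assms by (simp_all add: \<Delta>_def gram2_def power2_eq_square)
  then show "v \<bullet> a = 0" "v \<bullet> b = 0"
    unfolding v_def proj_coeff_fst_def proj_coeff_snd_def \<Delta>_def[symmetric]
    by (simp_all add: inner_diff_left inner_commute[of b a] inner_commute[of c] divide_simps)
       (simp_all add: algebra_simps)
qed

section \<open>Tangent vectors of the intersection of two quadrics\<close>

lemma norm_pair_combination_le:
  fixes a b :: "'a::real_normed_vector"
  shows "norm (fst s *\<^sub>R a + snd s *\<^sub>R b) \<le> norm s * (norm a + norm b)"
proof -
  have "\<bar>fst s\<bar> \<le> norm s" "\<bar>snd s\<bar> \<le> norm s"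
    using norm_fst_le[of "fst s" "snd s"] norm_snd_le[of "snd s" "fst s"] by simp_all
  then have "\<bar>fst s\<bar> * norm a + \<bar>snd s\<bar> * norm b \<le> norm s * (norm a + norm b)"
    unfolding distrib_left by (intro add_mono mult_right_mono) auto
  moreover have "norm (fst s *\<^sub>R a + snd s *\<^sub>R b) \<le> \<bar>fst s\<bar> * norm a + \<bar>snd s\<bar> * norm b"
    by (metis norm_scaleR norm_triangle_ineq)
  ultimately show ?thesis
    by linarith
qed

text \<open>The point is found as a fixed point, by Brouwer's theorem, of
  \<open>s \<mapsto> -\<onehalf> (Q\<^sub>A (t u + w s), Q\<^sub>B (t u + w s))\<close>, where \<open>w s = s\<^sub>1 a' + s\<^sub>2 b'\<close>: by duality
  \<open>Q\<^sub>A (x\<^sub>0 + t u + w s) = 2 s\<^sub>1 + Q\<^sub>A (t u + w s)\<close>, and similarly for \<open>B\<close>.\<close>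
lemma quadric_pair_point_near:
  fixes A B :: "real^'n^'n" and u a' b' :: "real^'n" and K :: real
  defines "R \<equiv> K * (norm u + 1)\<^sup>2" and "S \<equiv> norm a' + norm b'"
  assumes symA: "symmetric_mat A" and symB: "symmetric_mat B"
    and x0: "Qf A x0 = 0" "Qf B x0 = 0"
    and dual: "a' \<bullet> (A *v x0) = 1" "a' \<bullet> (B *v x0) = 0" "b' \<bullet> (A *v x0) = 0" "b' \<bullet> (B *v x0) = 1"
    and u: "u \<bullet> (A *v x0) = 0" "u \<bullet> (B *v x0) = 0"
    and K: "0 < K" "\<And>y. \<bar>Qf A y\<bar> \<le> K * (norm y)\<^sup>2" "\<And>y. \<bar>Qf B y\<bar> \<le> K * (norm y)\<^sup>2"
    and t: "0 < t" "R * S * t \<le> 1"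
  shows "\<exists>w. norm w \<le> R * S * t\<^sup>2 \<and> Qf A (x0 + t *\<^sub>R u + w) = 0 \<and> Qf B (x0 + t *\<^sub>R u + w) = 0"
proof -
  define r where "r = R * t\<^sup>2"
  define w where "w s = fst s *\<^sub>R a' + snd s *\<^sub>R b'" for s :: "real \<times> real"
  define T where "T s = (- Qf A (t *\<^sub>R u + w s) / 2, - Qf B (t *\<^sub>R u + w s) / 2)" for s
  have "0 < norm u + 1"
    using norm_ge_zero[of u] by linarith
  then have r: "0 < r"
    using K(1) t(1) by (simp add: r_def R_def)
  have norm_w: "norm (w s) \<le> norm s * S" for s
    unfolding w_def S_def by (rule norm_pair_combination_le)
  have "T \<in> cball 0 r \<rightarrow> cball 0 r"
  proof
    fix s :: "real \<times> real" assume "s \<in> cball 0 r"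
    then have "norm s \<le> r"
      by simp
    have "norm (t *\<^sub>R u + w s) \<le> t * norm u + norm s * S"
      using norm_triangle_ineq[of "t *\<^sub>R u" "w s"] norm_w[of s] t(1) by simp
    also have "\<dots> \<le> t * norm u + r * S"
      using \<open>norm s \<le> r\<close> by (simp add: S_def mult_right_mono)
    also have "\<dots> = t * norm u + t * (R * S * t)"
      by (simp add: r_def power2_eq_square)
    also have "\<dots> \<le> t * (norm u + 1)"
      using t by (simp add: distrib_left mult_left_le)
    finally have "(norm (t *\<^sub>R u + w s))\<^sup>2 \<le> t\<^sup>2 * (norm u + 1)\<^sup>2"
      by (metis norm_ge_zero power_mono power_mult_distrib)
    then have "K * (norm (t *\<^sub>R u + w s))\<^sup>2 \<le> r"
      using K(1) by (simp add: r_def R_def mult_left_mono mult_ac)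
    moreover have "norm (T s) \<le> \<bar>Qf A (t *\<^sub>R u + w s)\<bar> / 2 + \<bar>Qf B (t *\<^sub>R u + w s)\<bar> / 2"
      using norm_Pair_le[of "- Qf A (t *\<^sub>R u + w s) / 2" "- Qf B (t *\<^sub>R u + w s) / 2"]
      by (simp add: T_def)
    ultimately show "T s \<in> cball 0 r"
      using K(2,3)[of "t *\<^sub>R u + w s"] by simp
  qed
  moreover have "continuous_on (cball 0 r) T"
    unfolding T_def w_def by (intro continuous_intros) auto
  ultimately obtain s where s: "s \<in> cball 0 r" "T s = s"
    using brouwer_ball[OF r] by blast
  have "norm (w s) \<le> R * S * t\<^sup>2"
    using norm_w[of s] s(1) mult_right_mono[of "norm s" r S] by (simp add: r_def S_def mult_ac)
  moreover have "Qf A (x0 + t *\<^sub>R u + w s) = 0" "Qf B (x0 + t *\<^sub>R u + w s) = 0"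
    using Qf_add[OF symA, of x0 "t *\<^sub>R u + w s"] Qf_add[OF symB, of x0 "t *\<^sub>R u + w s"] s(2)
    by (simp_all add: x0 dual u w_def T_def inner_add_left add.assoc prod_eq_iff)
  ultimately show ?thesis
    by blast
qed

lemma tendsto_difference_quotient_quadratic_error:
  fixes W :: "real \<Rightarrow> 'a::real_normed_vector"
  assumes "\<forall>\<^sub>F t in at_right 0. norm (W t) \<le> C * t\<^sup>2"
  shows "((\<lambda>t. (1 / t) *\<^sub>R (x0 + t *\<^sub>R u + W t - x0)) \<longlongrightarrow> u) (at_right 0)"
proof -
  have pos: "\<forall>\<^sub>F t in at_right 0. 0 < (t::real)"
    by (simp add: eventually_at_right_less)
  from assms pos have "\<forall>\<^sub>F t in at_right 0. norm ((1 / t) *\<^sub>R W t) \<le> C * t"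
    by eventually_elim (auto simp: power2_eq_square field_simps)
  moreover have "((\<lambda>t. C * t) \<longlongrightarrow> 0) (at_right 0)"
    by (intro tendsto_eq_intros) auto
  ultimately have "((\<lambda>t. (1 / t) *\<^sub>R W t) \<longlongrightarrow> 0) (at_right 0)"
    by (rule Lim_null_comparison)
  then have "((\<lambda>t. u + (1 / t) *\<^sub>R W t) \<longlongrightarrow> u) (at_right 0)"
    using tendsto_add[OF tendsto_const] by fastforce
  moreover from pos have "\<forall>\<^sub>F t in at_right 0. u + (1 / t) *\<^sub>R W t = (1 / t) *\<^sub>R (x0 + t *\<^sub>R u + W t - x0)"
    by eventually_elim (simp add: scaleR_add_right)
  ultimately show ?thesis
    by (rule Lim_transform_eventually)
qed

lemma quadric_pair_tangent_curve:
  fixes A B :: "real^'n^'n"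
  assumes "symmetric_mat A" "symmetric_mat B"
    and "Qf A x0 = 0" "Qf B x0 = 0"
    and "a' \<bullet> (A *v x0) = 1" "a' \<bullet> (B *v x0) = 0" "b' \<bullet> (A *v x0) = 0" "b' \<bullet> (B *v x0) = 1"
    and "u \<bullet> (A *v x0) = 0" "u \<bullet> (B *v x0) = 0"
  obtains x where "((\<lambda>t. (1 / t) *\<^sub>R (x t - x0)) \<longlongrightarrow> u) (at_right 0)"
    and "\<forall>\<^sub>F t in at_right 0. Qf A (x t) = 0 \<and> Qf B (x t) = 0"
proof -
  obtain KA KB where KA: "0 < KA" "\<And>y. \<bar>Qf A y\<bar> \<le> KA * (norm y)\<^sup>2"
    and KB: "0 < KB" "\<And>y. \<bar>Qf B y\<bar> \<le> KB * (norm y)\<^sup>2"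
    using abs_Qf_le by metis
  define K where "K = max KA KB"
  have "KA * (norm y)\<^sup>2 \<le> K * (norm y)\<^sup>2" "KB * (norm y)\<^sup>2 \<le> K * (norm y)\<^sup>2" for y :: "real^'n"
    by (intro mult_right_mono; simp add: K_def)+
  then have K: "0 < K" "\<And>y. \<bar>Qf A y\<bar> \<le> K * (norm y)\<^sup>2" "\<And>y. \<bar>Qf B y\<bar> \<le> K * (norm y)\<^sup>2"
    using KA KB order_trans by (auto simp: K_def) blast+
  define R where "R = K * (norm u + 1)\<^sup>2"
  define S where "S = norm a' + norm b'"
  define t0 where "t0 = 1 / (R * S + 1)"
  have RS: "0 \<le> R * S"
    using K(1) by (simp add: R_def S_def)
  then have t0: "0 < t0"
    by (simp add: t0_def)
  have "\<forall>t\<in>{0<..t0}. \<exists>w. norm w \<le> R * S * t\<^sup>2 \<and>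
      Qf A (x0 + t *\<^sub>R u + w) = 0 \<and> Qf B (x0 + t *\<^sub>R u + w) = 0"
  proof
    fix t assume t: "t \<in> {0<..t0}"
    have "R * S * t \<le> (R * S + 1) * t0"
      using t RS by (intro mult_mono) auto
    then have "R * S * t \<le> 1"
      using RS by (simp add: t0_def)
    with t show "\<exists>w. norm w \<le> R * S * t\<^sup>2 \<and>
        Qf A (x0 + t *\<^sub>R u + w) = 0 \<and> Qf B (x0 + t *\<^sub>R u + w) = 0"
      using quadric_pair_point_near[OF assms K] unfolding R_def S_def by auto
  qed
  then obtain W where W: "\<And>t. t \<in> {0<..t0} \<Longrightarrow> norm (W t) \<le> R * S * t\<^sup>2 \<and>
      Qf A (x0 + t *\<^sub>R u + W t) = 0 \<and> Qf B (x0 + t *\<^sub>R u + W t) = 0"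
    by metis
  have near: "\<forall>\<^sub>F t in at_right 0. t \<in> {0<..t0}"
    using eventually_at_right_real[OF t0] by eventually_elim auto
  show thesis
  proof (rule that[of "\<lambda>t. x0 + t *\<^sub>R u + W t"])
    show "\<forall>\<^sub>F t in at_right 0. Qf A (x0 + t *\<^sub>R u + W t) = 0 \<and> Qf B (x0 + t *\<^sub>R u + W t) = 0"
      using near by eventually_elim (use W in blast)
    from near have "\<forall>\<^sub>F t in at_right 0. norm (W t) \<le> R * S * t\<^sup>2"
      by eventually_elim (use W in blast)
    then show "((\<lambda>t. (1 / t) *\<^sub>R (x0 + t *\<^sub>R u + W t - x0)) \<longlongrightarrow> u) (at_right 0)"
      by (rule tendsto_difference_quotient_quadratic_error)
  qed
qed

lemma Qf_zero_on_curve_tangent: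
  assumes M: "symmetric_mat M" "Qf M x0 = 0"
    and lim: "((\<lambda>t. (1 / t) *\<^sub>R (x t - x0)) \<longlongrightarrow> u) (at_right 0)"
    and zero: "\<forall>\<^sub>F t in at_right 0. Qf M (x t) = 0"
  shows "u \<bullet> (M *v x0) = 0" and "M *v x0 = 0 \<Longrightarrow> Qf M u = 0"
proof -
  define h where "h t = (1 / t) *\<^sub>R (x t - x0)" for t
  have expand: "Qf M (x t) = t * (2 * (h t \<bullet> (M *v x0)) + t * Qf M (h t))" if "0 < t" for t
  proof -
    have "x t = x0 + t *\<^sub>R h t"
      using that by (simp add: h_def)
    then show ?thesis
      using Qf_add[OF M(1), of x0 "t *\<^sub>R h t"] M(2) by (simp add: Qf_scaleR power2_eq_square algebra_simps)
  qed
  have pos: "\<forall>\<^sub>F t in at_right 0. 0 < (t::real)"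
    by (simp add: eventually_at_right_less)
  have "\<forall>\<^sub>F t in at_right 0. 2 * (h t \<bullet> (M *v x0)) + t * Qf M (h t) = 0"
    using zero pos by eventually_elim (simp add: expand)
  moreover have "((\<lambda>t. 2 * (h t \<bullet> (M *v x0)) + t * Qf M (h t)) \<longlongrightarrow> 2 * (u \<bullet> (M *v x0)) + 0 * Qf M u)
      (at_right 0)"
    using lim unfolding h_def[abs_def] by (intro tendsto_intros)
  ultimately show "u \<bullet> (M *v x0) = 0"
    using tendsto_unique[OF trivial_limit_at_right_real _ tendsto_eventually] by fastforce
  show "Qf M u = 0" if "M *v x0 = 0"
  proof -
    from zero pos have "\<forall>\<^sub>F t in at_right 0. Qf M (h t) = 0"
      by eventually_elim (simp add: expand that)
    moreover have "((\<lambda>t. Qf M (h t)) \<longlongrightarrow> Qf M u) (at_right 0)"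
      using lim unfolding h_def[abs_def] by (intro tendsto_intros)
    ultimately show "Qf M u = 0"
      using tendsto_unique[OF trivial_limit_at_right_real _ tendsto_eventually] by fastforce
  qed
qed

lemma quadric_pair_tangent_vanishing:
  fixes A B M :: "real^'n^'n"
  assumes sym: "symmetric_mat A" "symmetric_mat B" "symmetric_mat M"
    and x0: "Qf A x0 = 0" "Qf B x0 = 0" and gram: "gram2 (A *v x0) (B *v x0) \<noteq> 0"
    and vanish: "\<And>z. Qf A z = 0 \<Longrightarrow> Qf B z = 0 \<Longrightarrow> Qf M z = 0"
    and u: "u \<bullet> (A *v x0) = 0" "u \<bullet> (B *v x0) = 0"
  shows "u \<bullet> (M *v x0) = 0" and "M *v x0 = 0 \<Longrightarrow> Qf M u = 0"
proof -
  obtain a' b' where dual: "a' \<bullet> (A *v x0) = 1" "a' \<bullet> (B *v x0) = 0"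
    "b' \<bullet> (A *v x0) = 0" "b' \<bullet> (B *v x0) = 1"
    using dual_pair_exists[OF gram] .
  obtain x where lim: "((\<lambda>t. (1 / t) *\<^sub>R (x t - x0)) \<longlongrightarrow> u) (at_right 0)"
    and on_quadrics: "\<forall>\<^sub>F t in at_right 0. Qf A (x t) = 0 \<and> Qf B (x t) = 0"
    using quadric_pair_tangent_curve[OF sym(1,2) x0 dual u] .
  from on_quadrics have "\<forall>\<^sub>F t in at_right 0. Qf M (x t) = 0"
    by eventually_elim (simp add: vanish)
  from Qf_zero_on_curve_tangent[OF sym(3) vanish[OF x0] lim this]
  show "u \<bullet> (M *v x0) = 0" and "M *v x0 = 0 \<Longrightarrow> Qf M u = 0"
    by blast+
qed

section \<open>The coefficients \<open>\<alpha>\<close> and \<open>\<beta>\<close>\<close>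

lemma calN_coefficients:
  fixes A B C :: "real^'n^'n" and x :: "real^'n"
  defines "\<alpha> \<equiv> proj_coeff_fst (A *v x) (B *v x) (C *v x)"
    and "\<beta> \<equiv> proj_coeff_snd (A *v x) (B *v x) (C *v x)"
  assumes sym: "symmetric_mat A" "symmetric_mat B" "symmetric_mat C"
    and vanish: "\<forall>z. Qf A z = 0 \<and> Qf B z = 0 \<longrightarrow> Qf C z = 0"
    and x: "x \<in> calN A B"
  shows "(\<forall>v\<in>Vsp A B x. Qf C v = \<alpha> * Qf A v + \<beta> * Qf B v) \<and>
    C *v x = \<alpha> *\<^sub>R (A *v x) + \<beta> *\<^sub>R (B *v x)"
proof -
  define M where "M = C - \<alpha> *\<^sub>R A - \<beta> *\<^sub>R B"
  have on_quadrics: "Qf A x = 0" "Qf B x = 0" and gram: "gram2 (A *v x) (B *v x) \<noteq> 0"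
    using x gram2_pos[of "A *v x" "B *v x"] by (auto simp: calN_def)
  have QM: "Qf M z = Qf C z - \<alpha> * Qf A z - \<beta> * Qf B z" for z
    by (simp add: M_def Qf_diff_scaleR)
  have Mx: "M *v x = C *v x - \<alpha> *\<^sub>R (A *v x) - \<beta> *\<^sub>R (B *v x)"
    by (simp add: M_def algebra_simps scaleR_matrix_vector_assoc)
  have symM: "symmetric_mat M"
    using sym by (simp add: M_def symmetric_mat_diff_scaleR)
  have vanishM: "Qf M z = 0" if "Qf A z = 0" "Qf B z = 0" for z
    using vanish that by (simp add: QM)
  note tangent = quadric_pair_tangent_vanishing[OF sym(1,2) symM on_quadrics gram vanishM]
  have "(M *v x) \<bullet> (A *v x) = 0" "(M *v x) \<bullet> (B *v x) = 0"
    using proj_residual_orthogonal[OF gram] by (simp_all add: Mx \<alpha>_def \<beta>_def)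
  then have "(M *v x) \<bullet> (M *v x) = 0"
    using tangent(1) by metis
  then have Mx0: "M *v x = 0"
    by simp
  have "Qf M v = 0" if "v \<in> Vsp A B x" for v
  proof -
    have "A *v x \<in> span {A *v x, B *v x}" "B *v x \<in> span {A *v x, B *v x}"
      by (simp_all add: span_base)
    then have "v \<bullet> (A *v x) = 0" "v \<bullet> (B *v x) = 0"
      using that by (auto simp: Vsp_def orthogonal_comp_def orthogonal_def inner_commute)
    with tangent(2) Mx0 show ?thesis
      by blast
  qed
  with Mx0 show ?thesis
    by (auto simp: QM Mx algebra_simps)
qed

lemma real_analytic_on_proj_coeffs:
  fixes A B C :: "real^'n^'n"
  defines "U \<equiv> {x. gram2 (A *v x) (B *v x) \<noteq> 0}"
  shows "real_analytic_on (\<lambda>x. proj_coeff_fst (A *v x) (B *v x) (C *v x)) U"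
    and "real_analytic_on (\<lambda>x. proj_coeff_snd (A *v x) (B *v x) (C *v x)) U"
  unfolding U_def proj_coeff_fst_def proj_coeff_snd_def
  by (intro real_analytic_onI real_analytic_at_divide real_analytic_at_diff real_analytic_at_mult
      real_analytic_at_inner_matrix_vector; simp add: gram2_def power2_eq_square)+

theorem lemma3p7:
  fixes A B C :: "real^'n^'n"
  assumes "symmetric_mat A" and "symmetric_mat B" and "symmetric_mat C"
    and "\<forall>z. Qf A z = 0 \<and> Qf B z = 0 \<longrightarrow> Qf C z = 0"
  shows "\<forall>x0\<in>calN A B.
     (\<exists>\<alpha> \<beta> :: real.
        (\<forall>v\<in>Vsp A B x0. Qf C v = \<alpha> * Qf A v + \<beta> * Qf B v) \<and>
        C *v x0 = \<alpha> *\<^sub>R (A *v x0) + \<beta> *\<^sub>R (B *v x0)) \<and>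
     (\<exists>U \<alpha> \<beta>. open U \<and> x0 \<in> U \<and> real_analytic_on \<alpha> U \<and> real_analytic_on \<beta> U \<and>
        (\<forall>x\<in>U \<inter> calN A B.
           (\<forall>v\<in>Vsp A B x. Qf C v = \<alpha> x * Qf A v + \<beta> x * Qf B v) \<and>
           C *v x = \<alpha> x *\<^sub>R (A *v x) + \<beta> x *\<^sub>R (B *v x)))"
proof -
  define U where "U = {x. gram2 (A *v x) (B *v x) \<noteq> 0}"
  have "open U"
    unfolding U_def gram2_def
    by (intro open_Collect_neq continuous_intros matrix_vector_mult_linear_continuous_on)
  moreover have "calN A B \<subseteq> U"
    using gram2_pos by (force simp: U_def calN_def)
  ultimately show ?thesis
    using calN_coefficients[OF assms] real_analytic_on_proj_coeffs[of A B C, folded U_def]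
    by blast
qed

end
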